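(* Let $G$, $H$, the supervisors with $\Sigma_{o,i},\Sigma_{c,i},N_{o,i}$, a controllable event $\sigma\in\Sigma_c$, $N=\max\{N_{o,i}:i\in I^c(\sigma)\}$, and the verifiers $V^k_\sigma$ with reachable state sets $X^k_\sigma$ be as in the context. Then for every $k\in\{0,1,\dots,N-1\}$ the following are equivalent: (a) for every $s\in\mathcal{L}(H)$ with $|s|=k$, if $s\sigma\in\mathcal{L}(G)\setminus\mathcal{L}(H)$ then for every $(s_i)_{i\in I^c(\sigma)}\in\mathcal{T}^{\sigma}_{conf}(s)$ there exists $i\in I^c(\sigma)$ with $s_i\sigma\notin\mathcal{L}(H^{aug}_{N_{o,i}})$; (b) there is no state $(q,(q_i)_{i\in I^c(\sigma)},k)\in X^k_\sigma$ with $\sigma\in\Gamma(q)\setminus\Gamma_H(q)$ and $\sigma\in\Gamma^{aug}_{H,N_{o,i}}(q_i)$ for all $i\in I^c(\sigma)$.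
   Context: $G=(Q,\Sigma,\delta,\Gamma,q_0,Q_m)$ is a deterministic finite automaton (transition function extended to strings; $\Gamma(q)$ = set of events defined at $q$; $\mathcal{L}(G)$ its generated language). $H=(Q_H,\Sigma,\delta_H,\Gamma_H,q_0,Q_{m,H})$ is a sub-automaton of $G$ (obtained by deleting states of $G$ and their attached transitions). For a string $s$, $|s|$ is its length, $s_{-m}$ is its prefix of length $\max\{0,|s|-m\}$, $\Sigma^{\le M}$ is the set of strings of length at most $M$. Supervisors $I=\{1,\dots,n\}$: supervisor $i$ has observable events $\Sigma_{o,i}$, $\Sigma_{uo,i}=\Sigma\setminus\Sigma_{o,i}$, controllable events $\Sigma_{c,i}$, delay bound $N_{o,i}\in\mathbb{N}$; $\Sigma_c=\bigcup_i\Sigma_{c,i}$, $I^c(\sigma)=\{i:\sigma\in\Sigma_{c,i}\}$. $P_i$ is natural projection onto $\Sigma_{o,i}^*$; $\Theta_i^{N_{o,i}}(s)=\{P_i(s_{-m}):0\le m\le N_{o,i}\}$. For $s\in\mathcal{L}(H)$, $\mathcal{T}^\sigma_{conf}(s)$ is the set of tuples $(s_i)_{i\in I^c(\sigma)}$ with $P_i(s_i)\in\Theta_i^{N_{o,i}}(s)$ for all $i\in I^c(\sigma)$. Augmented automaton $H^{aug}_N$: states $Q_H\cup\{q_{dis}\}$, initial state $q_0$; for $q\in Q_H$, $e\in\Sigma$: $\delta^{aug}(q,e)=\delta_H(q,e)$ if $e\in\Gamma_H(q)$, $=q_{dis}$ if $e\notin\Gamma_H(q)$ and $e\in\Gamma_H(\delta_H(q,s'))$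 for some $s'\in\Sigma^{\le N}$ with $\delta_H(q,s')$ defined, undefined otherwise; $q_{dis}$ has no outgoing transitions; $\Gamma^{aug}_{H,N}(q)$ is the set of events defined at $q$ in $H^{aug}_N$. Verifier $V^k_\sigma$ ($0\le k\le N-1$): states are tuples $(q,(q_i)_{i\in I^c(\sigma)},d)$ with $q,q_i\in Q_H$, $d\in[0,k]$; initial state $(q_0,(q_0)_{i},0)$. At a state $(q,(q_i)_i,d)$ and for $e\in\Sigma$, each $i\in I^c(\sigma)$ falls in one case: C1: $k-d>N_{o,i}$, $e\in\Sigma_{o,i}$; C2: $k-d>N_{o,i}$, $e\in\Sigma_{uo,i}$; C3: $k-d\le N_{o,i}$, $\sigma\notin\Gamma^{aug}_{H,N_{o,i}}(q_i)$, $e\in\Sigma_{o,i}$; C4: $k-d\le N_{o,i}$, $\sigma\notin\Gamma^{aug}_{H,N_{o,i}}(q_i)$, $e\in\Sigma_{uo,i}$; C5: $k-d\le N_{o,i}$, $\sigma\in\Gamma^{aug}_{H,N_{o,i}}(q_i)$. Type-1 transition: if $d+1\le k$, $\delta_H(q,e)$ is defined, and $\delta_H(q_i,e)$ is defined for every $i$ in case C1 or C3, there is a transition to $(\delta_H(q,e),(q_i')_i,d+1)$ where $q_i'=\delta_H(q_i,e)$ for $i$ in C1 or C3 and $q_i'=q_i$ for $i$ in C2, C4 or C5. Type-2 transition: for each $i$ in case C2 or C4 with $\delta_H(q_i,e)$ defined, there is a transition to the state obtained by replacing $q_i$ by $\delta_H(q_i,e)$ (all other components, including $q$ and $d$, unchanged).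 $X^k_\sigma$ is the set of states reachable from the initial state. *)

theory Defs
  imports Main
begin

(* A DFA G over event type 'e (Sigma = UNIV) with state type 'q is given by its
   partial transition function delta :: 'q => 'e => 'q option and initial state q0.
   Marked states play no role in the statement and are omitted. *)

fun ext_delta :: "('q \<Rightarrow> 'e \<Rightarrow> 'q option) \<Rightarrow> 'q \<Rightarrow> 'e list \<Rightarrow> 'q option" where
  "ext_delta d q [] = Some q"
| "ext_delta d q (e # s) = (case d q e of None \<Rightarrow> None | Some q' \<Rightarrow> ext_delta d q' s)"

definition lang :: "('q \<Rightarrow> 'e \<Rightarrow> 'q option) \<Rightarrow> 'q \<Rightarrow> 'e list set" where
  "lang d q0 = {s. ext_delta d q0 s \<noteq> None}"

definition active :: "('q \<Rightarrow> 'e \<Rightarrow> 'q option) \<Rightarrow> 'q \<Rightarrow> 'e set" where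
  "active d q = {e. d q e \<noteq> None}"

(* sub-automaton H of G obtained by keeping only the states in QH *)
definition sub_delta :: "('q \<Rightarrow> 'e \<Rightarrow> 'q option) \<Rightarrow> 'q set \<Rightarrow> 'q \<Rightarrow> 'e \<Rightarrow> 'q option" where
  "sub_delta d QH q e =
     (if q \<in> QH then (case d q e of None \<Rightarrow> None | Some q' \<Rightarrow> if q' \<in> QH then Some q' else None)
      else None)"

definition proj :: "'e set \<Rightarrow> 'e list \<Rightarrow> 'e list" where
  "proj So s = filter (\<lambda>e. e \<in> So) s"

definition trunc :: "'e list \<Rightarrow> nat \<Rightarrow> 'e list" where
  "trunc s m = take (length s - m) s"

definition Theta :: "'e set \<Rightarrow> nat \<Rightarrow> 'e list \<Rightarrow> 'e list set" where
  "Theta So No s = {proj So (trunc s m) | m. m \<le> No}"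

(* tuples (s_i)_{i in Ic} represented as functions on the index set (values outside Ic irrelevant) *)
definition T_conf :: "(nat \<Rightarrow> 'e set) \<Rightarrow> (nat \<Rightarrow> nat) \<Rightarrow> nat set \<Rightarrow> 'e list \<Rightarrow> (nat \<Rightarrow> 'e list) set" where
  "T_conf So No Ic s = {ss. \<forall>i\<in>Ic. proj (So i) (ss i) \<in> Theta (So i) (No i) s}"

(* augmented automaton H^aug_N : states Q_H plus q_dis *)
datatype 'q aug_state = St 'q | Dis

definition aug_delta :: "('q \<Rightarrow> 'e \<Rightarrow> 'q option) \<Rightarrow> nat \<Rightarrow> 'q aug_state \<Rightarrow> 'e \<Rightarrow> 'q aug_state option" where
  "aug_delta dH N x e =
     (case x of
        Dis \<Rightarrow> None
      | St q \<Rightarrow>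
          (if dH q e \<noteq> None then map_option St (dH q e)
           else if (\<exists>s'. length s' \<le> N \<and>
                     (case ext_delta dH q s' of None \<Rightarrow> False | Some q' \<Rightarrow> dH q' e \<noteq> None))
                then Some Dis else None))"

definition lang_aug :: "('q \<Rightarrow> 'e \<Rightarrow> 'q option) \<Rightarrow> 'q \<Rightarrow> nat \<Rightarrow> 'e list set" where
  "lang_aug dH q0 N = lang (aug_delta dH N) (St q0)"

definition Gamma_aug :: "('q \<Rightarrow> 'e \<Rightarrow> 'q option) \<Rightarrow> nat \<Rightarrow> 'q \<Rightarrow> 'e set" where
  "Gamma_aug dH N q = active (aug_delta dH N) (St q)"

definition caseC1 :: "(nat \<Rightarrow> 'e set) \<Rightarrow> (nat \<Rightarrow> nat) \<Rightarrow> nat \<Rightarrow> nat \<Rightarrow> nat \<Rightarrow> 'e \<Rightarrow> bool" where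
  "caseC1 So No k d i e \<longleftrightarrow> int k - int d > int (No i) \<and> e \<in> So i"
definition caseC2 :: "(nat \<Rightarrow> 'e set) \<Rightarrow> (nat \<Rightarrow> nat) \<Rightarrow> nat \<Rightarrow> nat \<Rightarrow> nat \<Rightarrow> 'e \<Rightarrow> bool" where
  "caseC2 So No k d i e \<longleftrightarrow> int k - int d > int (No i) \<and> e \<notin> So i"
definition caseC3 :: "('q \<Rightarrow> 'e \<Rightarrow> 'q option) \<Rightarrow> (nat \<Rightarrow> 'e set) \<Rightarrow> (nat \<Rightarrow> nat) \<Rightarrow> 'e \<Rightarrow> nat \<Rightarrow> nat \<Rightarrow> nat \<Rightarrow> 'q \<Rightarrow> 'e \<Rightarrow> bool" where
  "caseC3 dH So No \<sigma> k d i qi e \<longleftrightarrow> int k - int d \<le> int (No i) \<and> \<sigma> \<notin> Gamma_aug dH (No i) qi \<and> e \<in> So i"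
definition caseC4 :: "('q \<Rightarrow> 'e \<Rightarrow> 'q option) \<Rightarrow> (nat \<Rightarrow> 'e set) \<Rightarrow> (nat \<Rightarrow> nat) \<Rightarrow> 'e \<Rightarrow> nat \<Rightarrow> nat \<Rightarrow> nat \<Rightarrow> 'q \<Rightarrow> 'e \<Rightarrow> bool" where
  "caseC4 dH So No \<sigma> k d i qi e \<longleftrightarrow> int k - int d \<le> int (No i) \<and> \<sigma> \<notin> Gamma_aug dH (No i) qi \<and> e \<notin> So i"

(* reachable states X^k_sigma of the verifier V^k_sigma.  Components of the tuple
   outside Ic are kept constant (equal to q0) and play no role. *)
inductive_set verif_reach ::
  "('q \<Rightarrow> 'e \<Rightarrow> 'q option) \<Rightarrow> 'q \<Rightarrow> (nat \<Rightarrow> 'e set) \<Rightarrow> (nat \<Rightarrow> nat) \<Rightarrow> nat set \<Rightarrow> 'e \<Rightarrow> nat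
   \<Rightarrow> ('q \<times> (nat \<Rightarrow> 'q) \<times> nat) set"
  for dH q0 So No Ic \<sigma> k where
  init: "(q0, (\<lambda>i. q0), 0) \<in> verif_reach dH q0 So No Ic \<sigma> k"
| type1: "\<lbrakk> (q, qs, d) \<in> verif_reach dH q0 So No Ic \<sigma> k; d + 1 \<le> k; dH q e = Some q';
           \<forall>i\<in>Ic. (caseC1 So No k d i e \<or> caseC3 dH So No \<sigma> k d i (qs i) e) \<longrightarrow> dH (qs i) e \<noteq> None \<rbrakk>
   \<Longrightarrow> (q', (\<lambda>i. if i \<in> Ic \<and> (caseC1 So No k d i e \<or> caseC3 dH So No \<sigma> k d i (qs i) e)
                  then the (dH (qs i) e) else qs i), d + 1) \<in> verif_reach dH q0 So No Ic \<sigma> k"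
| type2: "\<lbrakk> (q, qs, d) \<in> verif_reach dH q0 So No Ic \<sigma> k; i \<in> Ic;
           caseC2 So No k d i e \<or> caseC4 dH So No \<sigma> k d i (qs i) e; dH (qs i) e = Some qi' \<rbrakk>
   \<Longrightarrow> (q, qs(i := qi'), d) \<in> verif_reach dH q0 So No Ic \<sigma> k"

end

theory Submission
  imports Defs
begin

(* The reachable states (q, (q_i), k) with sigma enabled in every H^aug_{N_o,i}(q_i) are exactly
   those where q is reached in H by some s of length k and each q_i by some s_i with
   P_i(s_i) = P_i(s_{-m}), m <= N_o,i, and s_i sigma in L(H^aug_{N_o,i}); the two conditions of
   the theorem are then negations of each other.  Soundness is an invariant of the transitions:
   a component moved in step with an observable event of s keeps P_i(s_i) = P_i(s), and a
   component that stays put is in case C5, where k - d <= N_o,i turns its observation into a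
   delayed one.  For completeness the verifier follows s by type-1 moves; before each of them
   every component not in C5 consumes the unobservable events of s_i up to its next observable
   one by type-2 moves, and that observable event is then the next event of s. *)

lemma ext_delta_append:
  "ext_delta d q (a @ b) = (case ext_delta d q a of None \<Rightarrow> None | Some q' \<Rightarrow> ext_delta d q' b)"
  by (induction a arbitrary: q) (auto split: option.splits)

lemma ext_delta_snoc:
  "ext_delta d q (a @ [e]) = (case ext_delta d q a of None \<Rightarrow> None | Some q' \<Rightarrow> d q' e)"
  by (simp add: ext_delta_append split: option.splits)

lemma ext_delta_take_Suc:
  "l < length s \<Longrightarrow> ext_delta d q (take l s) = Some x \<Longrightarrow>
   ext_delta d q (take (Suc l) s) = d x (s ! l)"
  by (simp add: take_Suc_conv_app_nth ext_delta_snoc)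

lemma ext_delta_take_defined:
  "ext_delta d q s \<noteq> None \<Longrightarrow> ext_delta d q (take l s) \<noteq> None"
  using ext_delta_append[of d q "take l s" "drop l s"] by (auto split: option.splits)

lemma lang_snoc_iff:
  "ext_delta d q0 s = Some q \<Longrightarrow> s @ [e] \<in> lang d q0 \<longleftrightarrow> e \<in> active d q"
  by (simp add: lang_def active_def ext_delta_snoc)

lemma ext_delta_sub_delta:
  "ext_delta (sub_delta \<delta> QH) q s = Some x \<Longrightarrow> ext_delta \<delta> q s = Some x"
  by (induction s arbitrary: q) (auto simp: sub_delta_def split: option.splits if_splits)

lemma ext_delta_aug_Dis: "ext_delta (aug_delta dH N) Dis s \<in> {None, Some Dis}"
  by (cases s) (auto simp: aug_delta_def)

lemma ext_delta_aug_St: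
  "ext_delta (aug_delta dH N) (St q) s = Some (St x) \<longleftrightarrow> ext_delta dH q s = Some x"
proof (induction s arbitrary: q)
  case (Cons e s)
  show ?case
  proof (cases "dH q e")
    case None
    then have "aug_delta dH N (St q) e \<in> {None, Some Dis}"
      by (simp add: aug_delta_def)
    then have "ext_delta (aug_delta dH N) (St q) (e # s) \<in> {None, Some Dis}"
      using ext_delta_aug_Dis[of dH N s] by auto
    then show ?thesis
      using None by auto
  next
    case (Some y)
    then have "aug_delta dH N (St q) e = Some (St y)"
      by (simp add: aug_delta_def)
    then show ?thesis
      using Some Cons.IH by simp
  qed
qed simp

lemma lang_aug_snoc_iff:
  "s @ [e] \<in> lang_aug dH q0 N \<longleftrightarrow> (\<exists>x. ext_delta dH q0 s = Some x \<and> e \<in> Gamma_aug dH N x)"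
proof -
  have "s @ [e] \<in> lang_aug dH q0 N \<longleftrightarrow>
      (\<exists>y. ext_delta (aug_delta dH N) (St q0) s = Some y \<and> aug_delta dH N y e \<noteq> None)"
    by (auto simp: lang_aug_def lang_def ext_delta_snoc split: option.splits)
  also have "\<dots> \<longleftrightarrow>
      (\<exists>x. ext_delta (aug_delta dH N) (St q0) s = Some (St x) \<and> aug_delta dH N (St x) e \<noteq> None)"
  proof -
    have "aug_delta dH N y e \<noteq> None \<Longrightarrow> \<exists>x. y = St x" for y
      by (cases y) (simp_all add: aug_delta_def)
    then show ?thesis
      by blast
  qed
  finally show ?thesis
    by (simp add: ext_delta_aug_St Gamma_aug_def active_def)
qed

lemma proj_append [simp]: "proj So (a @ b) = proj So a @ proj So b"
  by (simp add: proj_def)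

lemma proj_Nil [simp]: "proj So [] = []"
  by (simp add: proj_def)

lemma proj_Cons: "proj So (e # s) = (if e \<in> So then e # proj So s else proj So s)"
  by (simp add: proj_def)

lemma proj_take_Suc:
  "d < length s \<Longrightarrow>
   proj So (take (Suc d) s) = (if s ! d \<in> So then proj So (take d s) @ [s ! d] else proj So (take d s))"
  by (simp add: take_Suc_conv_app_nth proj_def)

lemma length_proj_take_mono:
  "j \<le> j' \<Longrightarrow> length (proj So (take j s)) \<le> length (proj So (take j' s))"
  using take_add[of j "j' - j" s] by simp

lemma proj_split_at_observable:
  "l < length t \<Longrightarrow> t ! l \<in> So \<Longrightarrow>
   proj So t = proj So (take l t) @ t ! l # proj So (drop (Suc l) t)"
  by (metis id_take_nth_drop proj_Cons proj_append)

lemma proj_prefix_index_less: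
  assumes "proj So (take l t) = proj So (take d s)" "proj So t = proj So (take J s)"
    and "l < length t" "t ! l \<in> So"
  shows "d < J"
proof (rule ccontr)
  assume "\<not> d < J"
  then have "length (proj So (take J s)) \<le> length (proj So (take d s))"
    by (simp add: length_proj_take_mono)
  moreover have "proj So (take J s) = proj So (take d s) @ t ! l # proj So (drop (Suc l) t)"
    using assms(1,2) proj_split_at_observable[OF assms(3,4)] by simp
  ultimately show False
    by simp
qed

lemma proj_next_observable_eq:
  assumes "proj So (take l t) = proj So (take d s)" "proj So t = proj So (take J s)"
    and "d < J" "J \<le> length s" "s ! d \<in> So" "l = length t \<or> t ! l \<in> So"
  shows "l < length t \<and> t ! l = s ! d"
proof -
  obtain rest where "take J s = take d s @ s ! d # rest"
  proof
    have "take (Suc d) (take J s) = take d s @ [s ! d]"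
      using assms(3,4) by (simp add: min_def take_Suc_conv_app_nth)
    then show "take J s = take d s @ s ! d # drop (Suc d) (take J s)"
      by (metis append.assoc append_Cons append_Nil append_take_drop_id)
  qed
  then have "proj So t = proj So (take l t) @ s ! d # proj So rest"
    using assms(1,2,5) by (simp add: proj_Cons)
  moreover have "proj So t = proj So (take l t) @ proj So (drop l t)"
    by (metis append_take_drop_id proj_append)
  ultimately have drop_obs: "proj So (drop l t) = s ! d # proj So rest"
    by simp
  then have "l < length t"
    by (cases "l < length t") auto
  moreover have "drop l t = t ! l # drop (Suc l) t"
    using \<open>l < length t\<close> by (simp add: Cons_nth_drop_Suc)
  ultimately show ?thesis
    using drop_obs assms(6) by (simp add: proj_Cons)
qed

lemma mem_Theta_iff:
  "u \<in> Theta So No s \<longleftrightarrow> (\<exists>j \<le> length s. length s - j \<le> No \<and> u = proj So (take j s))"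
proof
  assume "u \<in> Theta So No s"
  then obtain m where "m \<le> No" "u = proj So (take (length s - m) s)"
    by (auto simp: Theta_def trunc_def)
  then show "\<exists>j \<le> length s. length s - j \<le> No \<and> u = proj So (take j s)"
    by (intro exI[of _ "length s - m"]) auto
next
  assume "\<exists>j \<le> length s. length s - j \<le> No \<and> u = proj So (take j s)"
  then obtain j where "j \<le> length s" "length s - j \<le> No" "u = proj So (take j s)"
    by blast
  then show "u \<in> Theta So No s"
    unfolding Theta_def trunc_def by (intro CollectI exI[of _ "length s - j"]) auto
qed

lemma sub_delta_violation_iff:
  assumes "ext_delta (sub_delta \<delta> QH) q0 s = Some q"
  shows "s @ [e] \<in> lang \<delta> q0 - lang (sub_delta \<delta> QH) q0 \<longleftrightarrow>
    e \<in> active \<delta> q - active (sub_delta \<delta> QH) q"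
  using lang_snoc_iff[OF assms] lang_snoc_iff[OF ext_delta_sub_delta[OF assms]] by simp

lemma sub_delta_violations_iff:
  "(\<forall>s \<in> lang (sub_delta \<delta> QH) q0. P s \<longrightarrow>
      s @ [e] \<in> lang \<delta> q0 - lang (sub_delta \<delta> QH) q0 \<longrightarrow> Q s) \<longleftrightarrow>
   (\<forall>s q. ext_delta (sub_delta \<delta> QH) q0 s = Some q \<longrightarrow> P s \<longrightarrow>
      e \<in> active \<delta> q - active (sub_delta \<delta> QH) q \<longrightarrow> Q s)"
proof -
  have "s \<in> lang (sub_delta \<delta> QH) q0 \<longleftrightarrow> (\<exists>q. ext_delta (sub_delta \<delta> QH) q0 s = Some q)" for s
    by (simp add: lang_def)
  then show ?thesis
    using sub_delta_violation_iff by (metis (no_types, lifting))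
qed

locale verifier =
  fixes dH :: "'q \<Rightarrow> 'e \<Rightarrow> 'q option" and q0 :: 'q and So :: "nat \<Rightarrow> 'e set"
    and No :: "nat \<Rightarrow> nat" and Ic :: "nat set" and \<sigma> :: 'e and k :: nat
begin

abbreviation reachable :: "('q \<times> (nat \<Rightarrow> 'q) \<times> nat) set" where
  "reachable \<equiv> verif_reach dH q0 So No Ic \<sigma> k"

(* Case C5 of the verifier: component i is no longer moved. *)

definition frozen :: "nat \<Rightarrow> nat \<Rightarrow> 'q \<Rightarrow> bool" where
  "frozen i d x \<longleftrightarrow> k - d \<le> No i \<and> \<sigma> \<in> Gamma_aug dH (No i) x"

lemma frozen_mono: "frozen i d x \<Longrightarrow> d \<le> d' \<Longrightarrow> frozen i d' x"
  by (auto simp: frozen_def)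

lemma observable_move_iff:
  "caseC1 So No k d i e \<or> caseC3 dH So No \<sigma> k d i x e \<longleftrightarrow> \<not> frozen i d x \<and> e \<in> So i"
  by (auto simp: caseC1_def caseC3_def frozen_def)

lemma unobservable_move_iff:
  "caseC2 So No k d i e \<or> caseC4 dH So No \<sigma> k d i x e \<longleftrightarrow> \<not> frozen i d x \<and> e \<notin> So i"
  by (auto simp: caseC2_def caseC4_def frozen_def)

definition consistent :: "nat \<Rightarrow> 'e list \<Rightarrow> 'q \<Rightarrow> bool" where
  "consistent i s x \<longleftrightarrow> (\<exists>t. ext_delta dH q0 t = Some x \<and>
     (proj (So i) t = proj (So i) s \<or>
      (\<exists>j \<le> length s. frozen i j x \<and> proj (So i) t = proj (So i) (take j s))))"

lemma consistent_unfrozen: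
  assumes "consistent i s x" "\<not> frozen i (length s) x"
  obtains t where "ext_delta dH q0 t = Some x" "proj (So i) t = proj (So i) s"
  using assms frozen_mono unfolding consistent_def by blast

lemma consistent_observable_step:
  assumes "consistent i s x" "\<not> frozen i (length s) x" "e \<in> So i" "dH x e = Some y"
  shows "consistent i (s @ [e]) y"
proof -
  obtain t where "ext_delta dH q0 t = Some x" "proj (So i) t = proj (So i) s"
    using assms(1,2) by (rule consistent_unfrozen)
  then have "ext_delta dH q0 (t @ [e]) = Some y \<and> proj (So i) (t @ [e]) = proj (So i) (s @ [e])"
    using assms(3,4) by (simp add: ext_delta_snoc proj_def)
  then show ?thesis
    unfolding consistent_def by blast
qed

lemma consistent_unobservable_step:
  assumes "consistent i s x" "\<not> frozen i (length s) x" "e \<notin> So i" "dH x e = Some y"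
  shows "consistent i s y"
proof -
  obtain t where "ext_delta dH q0 t = Some x" "proj (So i) t = proj (So i) s"
    using assms(1,2) by (rule consistent_unfrozen)
  then have "ext_delta dH q0 (t @ [e]) = Some y \<and> proj (So i) (t @ [e]) = proj (So i) s"
    using assms(3,4) by (simp add: ext_delta_snoc proj_def)
  then show ?thesis
    unfolding consistent_def by blast
qed

lemma consistent_idle_step:
  assumes "consistent i s x" "frozen i (length s) x \<or> e \<notin> So i"
  shows "consistent i (s @ [e]) x"
proof -
  obtain t where t: "ext_delta dH q0 t = Some x" and
    obs: "proj (So i) t = proj (So i) s \<or>
      (\<exists>j \<le> length s. frozen i j x \<and> proj (So i) t = proj (So i) (take j s))"
    using assms(1) unfolding consistent_def by blast
  have "proj (So i) t = proj (So i) (s @ [e]) \<or>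
      (\<exists>j \<le> length (s @ [e]). frozen i j x \<and> proj (So i) t = proj (So i) (take j (s @ [e])))"
  proof (cases "proj (So i) t = proj (So i) s")
    case True
    with assms(2) show ?thesis
      by (cases "e \<in> So i") (auto simp: proj_def intro!: exI[of _ "length s"])
  next
    case False
    then obtain j where "j \<le> length s" "frozen i j x" "proj (So i) t = proj (So i) (take j s)"
      using obs by blast
    then show ?thesis
      by (intro disjI2 exI[of _ j]) simp
  qed
  with t show ?thesis
    unfolding consistent_def by blast
qed

lemma consistent_Theta:
  assumes "consistent i s x" "length s = k"
  shows "\<exists>t. ext_delta dH q0 t = Some x \<and> proj (So i) t \<in> Theta (So i) (No i) s"
proof -
  obtain t where t: "ext_delta dH q0 t = Some x" and
    obs: "proj (So i) t = proj (So i) s \<or>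
      (\<exists>j \<le> length s. frozen i j x \<and> proj (So i) t = proj (So i) (take j s))"
    using assms(1) unfolding consistent_def by blast
  have "\<exists>j \<le> length s. length s - j \<le> No i \<and> proj (So i) t = proj (So i) (take j s)"
    using obs
  proof
    assume "proj (So i) t = proj (So i) s"
    then show ?thesis
      by (intro exI[of _ "length s"]) simp
  qed (use assms(2) frozen_def in auto)
  with t show ?thesis
    unfolding mem_Theta_iff by blast
qed

lemma reachable_sound:
  assumes "(q, qs, d) \<in> reachable"
  shows "\<exists>s. length s = d \<and> ext_delta dH q0 s = Some q \<and> (\<forall>i\<in>Ic. consistent i s (qs i))"
  using assms
proof (induction rule: verif_reach.induct)
  case init
  have "consistent i [] q0" for i
    unfolding consistent_def by (auto intro: exI[of _ "[]"])
  then show ?case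
    by (auto intro: exI[of _ "[]"])
next
  case (type1 q qs d e q')
  then obtain s where s: "length s = d" "ext_delta dH q0 s = Some q"
    "\<forall>i\<in>Ic. consistent i s (qs i)"
    by blast
  let ?moves = "\<lambda>i. caseC1 So No k d i e \<or> caseC3 dH So No \<sigma> k d i (qs i) e"
  have "consistent i (s @ [e]) (if i \<in> Ic \<and> ?moves i then the (dH (qs i) e) else qs i)"
    if i: "i \<in> Ic" for i
  proof (cases "?moves i")
    case True
    then obtain y where "dH (qs i) e = Some y"
      using type1.hyps(4) i by blast
    then show ?thesis
      using True i s consistent_observable_step observable_move_iff by auto
  next
    case False
    then show ?thesis
      using i s consistent_idle_step observable_move_iff by auto
  qed
  then have "\<forall>i\<in>Ic. consistent i (s @ [e]) (if i \<in> Ic \<and> ?moves i then the (dH (qs i) e) else qs i)"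
    by blast
  moreover have "length (s @ [e]) = d + 1" "ext_delta dH q0 (s @ [e]) = Some q'"
    using s type1.hyps(3) by (simp_all add: ext_delta_snoc)
  ultimately show ?case
    by blast
next
  case (type2 q qs d i e qi')
  then obtain s where s: "length s = d" "ext_delta dH q0 s = Some q"
    "\<forall>i\<in>Ic. consistent i s (qs i)"
    by blast
  have "consistent i s qi'"
    using consistent_unobservable_step s type2.hyps(2-4) unobservable_move_iff by blast
  then show ?case
    using s by auto
qed

end

(* s and the s_i witness a violation of condition (a); J i is the length of the prefix s_{-m}
   whose observation supervisor i sees. *)
locale verifier_witness = verifier dH q0 So No Ic \<sigma> k
    for dH :: "'q \<Rightarrow> 'e \<Rightarrow> 'q option" and q0 So No Ic \<sigma> k +
  fixes s :: "'e list" and ss :: "nat \<Rightarrow> 'e list" and J :: "nat \<Rightarrow> nat"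
  assumes finite_Ic: "finite Ic"
    and length_s: "length s = k"
    and s_defined: "ext_delta dH q0 s \<noteq> None"
    and ss_enables:
      "\<And>i. i \<in> Ic \<Longrightarrow> \<exists>x. ext_delta dH q0 (ss i) = Some x \<and> \<sigma> \<in> Gamma_aug dH (No i) x"
    and ss_delay:
      "\<And>i. i \<in> Ic \<Longrightarrow> J i \<le> k \<and> k - J i \<le> No i \<and> proj (So i) (ss i) = proj (So i) (take (J i) s)"
begin

definition synced :: "nat \<Rightarrow> nat \<Rightarrow> nat \<Rightarrow> 'q \<Rightarrow> bool" where
  "synced i d l x \<longleftrightarrow> l \<le> length (ss i) \<and> ext_delta dH q0 (take l (ss i)) = Some x \<and>
     proj (So i) (take l (ss i)) = proj (So i) (take d s)"

definition tracked :: "nat \<Rightarrow> nat \<Rightarrow> 'q \<Rightarrow> bool" where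
  "tracked i d x \<longleftrightarrow> frozen i d x \<or> (\<exists>l. synced i d l x)"

definition ready :: "nat \<Rightarrow> nat \<Rightarrow> 'q \<Rightarrow> bool" where
  "ready i d x \<longleftrightarrow> frozen i d x \<or> (\<exists>l. synced i d l x \<and> (l = length (ss i) \<or> ss i ! l \<in> So i))"

lemma ss_defined: "i \<in> Ic \<Longrightarrow> ext_delta dH q0 (ss i) \<noteq> None"
  using ss_enables by blast

lemma synced_end_enables:
  "i \<in> Ic \<Longrightarrow> synced i d (length (ss i)) x \<Longrightarrow> \<sigma> \<in> Gamma_aug dH (No i) x"
  using ss_enables[of i] by (auto simp: synced_def)

lemma synced_ready_component:
  assumes "i \<in> Ic" "(q, qs, d) \<in> reachable" "synced i d l (qs i)"
  shows "\<exists>x. (q, qs(i := x), d) \<in> reachable \<and> ready i d x"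
  using assms(2,3)
proof (induction "length (ss i) - l" arbitrary: l qs)
  case 0
  then show ?case
    by (intro exI[of _ "qs i"]) (auto simp: ready_def synced_def)
next
  case (Suc m)
  show ?case
  proof (cases "ss i ! l \<in> So i \<or> frozen i d (qs i)")
    case True
    then show ?thesis
      using Suc.prems by (intro exI[of _ "qs i"]) (auto simp: ready_def)
  next
    case False
    have l: "l < length (ss i)"
      using Suc.hyps by simp
    have "ext_delta dH q0 (take (Suc l) (ss i)) = dH (qs i) (ss i ! l)"
      using Suc.prems(2) by (intro ext_delta_take_Suc[OF l]) (simp add: synced_def)
    then obtain y where y: "dH (qs i) (ss i ! l) = Some y"
      using ext_delta_take_defined[OF ss_defined[OF assms(1)], of "Suc l"] by auto
    have "caseC2 So No k d i (ss i ! l) \<or> caseC4 dH So No \<sigma> k d i (qs i) (ss i ! l)"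
      using False by (simp add: unobservable_move_iff)
    then have "(q, qs(i := y), d) \<in> reachable"
      by (rule verif_reach.type2[OF Suc.prems(1) assms(1) _ y])
    moreover have "synced i d (Suc l) ((qs(i := y)) i)"
      using Suc.prems(2) False l y
      by (simp add: synced_def ext_delta_take_Suc proj_take_Suc Suc_le_eq)
    moreover have "m = length (ss i) - Suc l"
      using Suc.hyps(2) by simp
    ultimately obtain x where "(q, (qs(i := y))(i := x), d) \<in> reachable" "ready i d x"
      using Suc.hyps(1) by blast
    then show ?thesis
      by (metis fun_upd_upd)
  qed
qed

lemma tracked_ready_component:
  assumes "i \<in> Ic" "(q, qs, d) \<in> reachable" "tracked i d (qs i)"
  shows "\<exists>x. (q, qs(i := x), d) \<in> reachable \<and> ready i d x"
  using assms(3) unfolding tracked_def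
proof (elim disjE exE)
  assume "frozen i d (qs i)"
  then show ?thesis
    using assms(2) by (intro exI[of _ "qs i"]) (simp add: ready_def)
qed (rule synced_ready_component[OF assms(1,2)])

lemma tracked_ready:
  assumes "(q, qs, d) \<in> reachable" "\<forall>i\<in>Ic. tracked i d (qs i)"
  shows "\<exists>qs'. (q, qs', d) \<in> reachable \<and> (\<forall>i\<in>Ic. ready i d (qs' i))"
proof -
  have "\<exists>qs'. (q, qs', d) \<in> reachable \<and> (\<forall>i\<in>F. ready i d (qs' i)) \<and>
      (\<forall>i. i \<notin> F \<longrightarrow> qs' i = qs i)"
    if "F \<subseteq> Ic" for F
    using finite_subset[OF that finite_Ic] that
  proof (induction F rule: finite_induct)
    case empty
    then show ?case
      using assms(1) by blast
  next
    case (insert a F)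
    then obtain qs' where qs': "(q, qs', d) \<in> reachable" "\<forall>i\<in>F. ready i d (qs' i)"
      "\<forall>i. i \<notin> F \<longrightarrow> qs' i = qs i"
      by blast
    have "tracked a d (qs' a)"
      using assms(2) insert.hyps(2) insert.prems qs'(3) by auto
    then obtain x where "(q, qs'(a := x), d) \<in> reachable" "ready a d x"
      using tracked_ready_component[OF _ qs'(1)] insert.prems by blast
    moreover have "\<forall>i\<in>insert a F. ready i d ((qs'(a := x)) i)"
      using qs'(2) \<open>ready a d x\<close> by auto
    moreover have "\<forall>i. i \<notin> insert a F \<longrightarrow> (qs'(a := x)) i = qs i"
      using qs'(3) by auto
    ultimately show ?case
      by blast
  qed
  then show ?thesis
    by blast
qed

lemma ready_next_event:
  assumes "i \<in> Ic" "d < k" "ready i d x" "\<not> frozen i d x" "s ! d \<in> So i"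
  shows "\<exists>l < length (ss i). ss i ! l = s ! d \<and> synced i d l x"
proof -
  obtain l where l: "synced i d l x" "l = length (ss i) \<or> ss i ! l \<in> So i"
    using assms(3,4) unfolding ready_def by blast
  have delay: "J i \<le> k" "k - J i \<le> No i" "proj (So i) (ss i) = proj (So i) (take (J i) s)"
    using ss_delay[OF assms(1)] by auto
  have "d < J i"
  proof (cases "k - d \<le> No i")
    case True
    then have "\<sigma> \<notin> Gamma_aug dH (No i) x"
      using assms(4) by (simp add: frozen_def)
    then have "l \<noteq> length (ss i)"
      using l(1) synced_end_enables[OF assms(1)] by auto
    then have "l < length (ss i) \<and> ss i ! l \<in> So i"
      using l unfolding synced_def by auto
    then show ?thesis
      using l(1) delay(3) proj_prefix_index_less unfolding synced_def by blast
  qed (use delay in linarith)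
  then show ?thesis
    using proj_next_observable_eq[of "So i" l "ss i" d s "J i"] l delay assms(5) length_s
    unfolding synced_def by auto
qed

lemma ready_step:
  assumes "(q, qs, d) \<in> reachable" "d < k" "ext_delta dH q0 (take d s) = Some q"
    and "\<forall>i\<in>Ic. ready i d (qs i)"
  shows "\<exists>q' qs'. (q', qs', Suc d) \<in> reachable \<and> ext_delta dH q0 (take (Suc d) s) = Some q' \<and>
    (\<forall>i\<in>Ic. tracked i (Suc d) (qs' i))"
proof -
  let ?e = "s ! d"
  have d: "d < length s"
    using assms(2) length_s by simp
  obtain q' where q': "dH q ?e = Some q'" "ext_delta dH q0 (take (Suc d) s) = Some q'"
    using ext_delta_take_Suc[OF d assms(3)] ext_delta_take_defined[OF s_defined, of "Suc d"]
    by auto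
  let ?moves = "\<lambda>i. caseC1 So No k d i ?e \<or> caseC3 dH So No \<sigma> k d i (qs i) ?e"
  let ?qs' = "\<lambda>i. if i \<in> Ic \<and> ?moves i then the (dH (qs i) ?e) else qs i"
  have moving: "\<exists>y. dH (qs i) ?e = Some y \<and> tracked i (Suc d) y"
    if i: "i \<in> Ic" and moves: "?moves i" for i
  proof -
    obtain l where l: "l < length (ss i)" "ss i ! l = ?e" "synced i d l (qs i)"
      using ready_next_event[OF i assms(2)] assms(4) i moves observable_move_iff by blast
    have "ext_delta dH q0 (take (Suc l) (ss i)) = dH (qs i) (ss i ! l)"
      using l(3) by (intro ext_delta_take_Suc[OF l(1)]) (simp add: synced_def)
    then obtain y where y: "dH (qs i) ?e = Some y" "ext_delta dH q0 (take (Suc l) (ss i)) = Some y"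
      using ext_delta_take_defined[OF ss_defined[OF i], of "Suc l"] l(2) by auto
    then have "synced i (Suc d) (Suc l) y"
      using l d by (simp add: synced_def proj_take_Suc Suc_le_eq)
    with y(1) show ?thesis
      unfolding tracked_def by blast
  qed
  have "(q', ?qs', Suc d) \<in> reachable"
    using verif_reach.type1[OF assms(1) _ q'(1)] moving assms(2) by fastforce
  moreover have "tracked i (Suc d) (?qs' i)" if i: "i \<in> Ic" for i
  proof (cases "?moves i")
    case True
    then show ?thesis
      using moving[OF i] i by auto
  next
    case False
    then have "frozen i d (qs i) \<or> ?e \<notin> So i"
      using observable_move_iff by blast
    then show ?thesis
      using False assms(4) i d frozen_mono[of i d "qs i" "Suc d"]
      by (auto simp: ready_def tracked_def synced_def proj_take_Suc)
  qed
  ultimately show ?thesis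
    using q'(2) by blast
qed

lemma reachable_ready:
  "d \<le> k \<Longrightarrow> \<exists>q qs. (q, qs, d) \<in> reachable \<and> ext_delta dH q0 (take d s) = Some q \<and>
     (\<forall>i\<in>Ic. ready i d (qs i))"
proof (induction d)
  case 0
  have "tracked i 0 q0" for i
    unfolding tracked_def synced_def by (auto intro!: exI[of _ 0])
  then show ?case
    using tracked_ready[OF verif_reach.init] by auto
next
  case (Suc d)
  then obtain q qs where "(q, qs, d) \<in> reachable" "ext_delta dH q0 (take d s) = Some q"
    "\<forall>i\<in>Ic. ready i d (qs i)"
    by auto
  then obtain q' qs' where "(q', qs', Suc d) \<in> reachable" "ext_delta dH q0 (take (Suc d) s) = Some q'"
    "\<forall>i\<in>Ic. tracked i (Suc d) (qs' i)"
    using ready_step Suc.prems by (meson Suc_le_lessD)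
  then show ?case
    using tracked_ready by blast
qed

lemma reachable_complete:
  "\<exists>q qs. (q, qs, k) \<in> reachable \<and> ext_delta dH q0 s = Some q \<and>
     (\<forall>i\<in>Ic. \<sigma> \<in> Gamma_aug dH (No i) (qs i))"
proof -
  obtain q qs where reach: "(q, qs, k) \<in> reachable" "ext_delta dH q0 (take k s) = Some q"
    and ready: "\<forall>i\<in>Ic. ready i k (qs i)"
    using reachable_ready by blast
  have "\<sigma> \<in> Gamma_aug dH (No i) (qs i)" if i: "i \<in> Ic" for i
  proof (cases "frozen i k (qs i)")
    case False
    then obtain l where l: "synced i k l (qs i)" "l = length (ss i) \<or> ss i ! l \<in> So i"
      using ready i unfolding ready_def by blast
    have "l = length (ss i)"
    proof (rule ccontr)
      assume "l \<noteq> length (ss i)"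
      then have "l < length (ss i)" "ss i ! l \<in> So i"
        using l unfolding synced_def by auto
      then have "k < J i"
        using l(1) proj_prefix_index_less[of "So i" l "ss i" k s "J i"] ss_delay[OF i]
        unfolding synced_def by blast
      then show False
        using ss_delay[OF i] by simp
    qed
    then show ?thesis
      using l(1) synced_end_enables[OF i] by simp
  qed (simp add: frozen_def)
  then show ?thesis
    using reach length_s by auto
qed

end

lemma (in verifier) reachable_enabled_iff:
  assumes "finite Ic"
  shows "(\<exists>qs. (q, qs, k) \<in> reachable \<and> (\<forall>i\<in>Ic. \<sigma> \<in> Gamma_aug dH (No i) (qs i))) \<longleftrightarrow>
    (\<exists>s. length s = k \<and> ext_delta dH q0 s = Some q \<and>
       (\<exists>ss. ss \<in> T_conf So No Ic s \<and> (\<forall>i\<in>Ic. ss i @ [\<sigma>] \<in> lang_aug dH q0 (No i))))"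
    (is "?reach \<longleftrightarrow> ?conflict")
proof
  assume ?reach
  then obtain qs s where s: "length s = k" "ext_delta dH q0 s = Some q"
    and enabled: "\<forall>i\<in>Ic. \<sigma> \<in> Gamma_aug dH (No i) (qs i)"
    and cons: "\<forall>i\<in>Ic. consistent i s (qs i)"
    using reachable_sound by blast
  have "\<forall>i\<in>Ic. \<exists>t. ext_delta dH q0 t = Some (qs i) \<and> proj (So i) t \<in> Theta (So i) (No i) s"
    using cons consistent_Theta s(1) by blast
  from bchoice[OF this] obtain ss
    where "\<forall>i\<in>Ic. ext_delta dH q0 (ss i) = Some (qs i) \<and> proj (So i) (ss i) \<in> Theta (So i) (No i) s"
    by blast
  then have "ss \<in> T_conf So No Ic s" "\<forall>i\<in>Ic. ss i @ [\<sigma>] \<in> lang_aug dH q0 (No i)"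
    using enabled by (auto simp: T_conf_def lang_aug_snoc_iff)
  with s show ?conflict
    by blast
next
  assume ?conflict
  then obtain s ss where s: "length s = k" "ext_delta dH q0 s = Some q"
    and conf: "ss \<in> T_conf So No Ic s" and aug: "\<forall>i\<in>Ic. ss i @ [\<sigma>] \<in> lang_aug dH q0 (No i)"
    by blast
  have "\<forall>i\<in>Ic. \<exists>j. j \<le> k \<and> k - j \<le> No i \<and> proj (So i) (ss i) = proj (So i) (take j s)"
    using conf s(1) unfolding T_conf_def mem_Theta_iff by blast
  from bchoice[OF this] obtain J
    where "\<forall>i\<in>Ic. J i \<le> k \<and> k - J i \<le> No i \<and> proj (So i) (ss i) = proj (So i) (take (J i) s)"
    by blast
  then interpret verifier_witness dH q0 So No Ic \<sigma> k s ss J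
    using assms s aug by unfold_locales (auto simp: lang_aug_snoc_iff)
  show ?reach
    using reachable_complete s(2) by auto
qed

theorem proposition1:
  fixes \<delta> :: "'q::finite \<Rightarrow> 'e::finite \<Rightarrow> 'q option"
    and q0 :: 'q and QH :: "'q set"
    and n :: nat
    and So Sc :: "nat \<Rightarrow> 'e set" and No :: "nat \<Rightarrow> nat"
    and \<sigma> :: 'e and k :: nat
  assumes "q0 \<in> QH"
    and "\<sigma> \<in> (\<Union>i\<in>{1..n}. Sc i)"
    and "k < Max (No ` {i \<in> {1..n}. \<sigma> \<in> Sc i})"
  shows "(\<forall>s \<in> lang (sub_delta \<delta> QH) q0. length s = k \<longrightarrow>
            s @ [\<sigma>] \<in> lang \<delta> q0 - lang (sub_delta \<delta> QH) q0 \<longrightarrow>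
            (\<forall>ss \<in> T_conf So No {i \<in> {1..n}. \<sigma> \<in> Sc i} s.
               \<exists>i \<in> {i \<in> {1..n}. \<sigma> \<in> Sc i}.
                 ss i @ [\<sigma>] \<notin> lang_aug (sub_delta \<delta> QH) q0 (No i)))
     \<longleftrightarrow>
     \<not> (\<exists>q qs. (q, qs, k) \<in> verif_reach (sub_delta \<delta> QH) q0 So No {i \<in> {1..n}. \<sigma> \<in> Sc i} \<sigma> k
              \<and> \<sigma> \<in> active \<delta> q - active (sub_delta \<delta> QH) q
              \<and> (\<forall>i \<in> {i \<in> {1..n}. \<sigma> \<in> Sc i}. \<sigma> \<in> Gamma_aug (sub_delta \<delta> QH) (No i) (qs i)))"
  (is "?safe \<longleftrightarrow> \<not> ?bad_state")
proof -
  define Ic where "Ic = {i \<in> {1..n}. \<sigma> \<in> Sc i}"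
  define dH where "dH = sub_delta \<delta> QH"
  let ?witness = "\<lambda>s. \<exists>ss. ss \<in> T_conf So No Ic s \<and> (\<forall>i\<in>Ic. ss i @ [\<sigma>] \<in> lang_aug dH q0 (No i))"
  have "finite Ic"
    unfolding Ic_def by simp
  then have enabled_iff: "(\<exists>qs. (q, qs, k) \<in> verif_reach dH q0 So No Ic \<sigma> k \<and>
      (\<forall>i\<in>Ic. \<sigma> \<in> Gamma_aug dH (No i) (qs i))) \<longleftrightarrow>
    (\<exists>s. length s = k \<and> ext_delta dH q0 s = Some q \<and> ?witness s)" for q
    by (rule verifier.reachable_enabled_iff)
  have "?safe \<longleftrightarrow> (\<forall>s q. ext_delta dH q0 s = Some q \<longrightarrow> length s = k \<longrightarrow>
      \<sigma> \<in> active \<delta> q - active dH q \<longrightarrow> \<not> ?witness s)"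
    unfolding sub_delta_violations_iff Ic_def dH_def by blast
  also have "\<dots> \<longleftrightarrow> \<not> (\<exists>q. \<sigma> \<in> active \<delta> q - active dH q \<and>
      (\<exists>s. length s = k \<and> ext_delta dH q0 s = Some q \<and> ?witness s))"
    by blast
  also have "\<dots> \<longleftrightarrow> \<not> ?bad_state"
    unfolding enabled_iff[symmetric] unfolding Ic_def dH_def by blast
  finally show ?thesis .
qed

end
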